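(* For each $n\ge 3$, let $k$ be chosen uniformly at random from $\mathbb{Z}_n^\times$. Then $\mathbf{E}[D(\psi_k)]=O(\log^2 n\,\log\log n)$, with an absolute implicit constant. In particular, for every such $n$ there exists $k\in\mathbb{Z}_n^\times$ with $D(\psi_k)=O(\log^2 n\,\log\log n)$.
   Context: For $k\in\mathbb{Z}_n^\times$ (the units of $\mathbb{Z}_n$), $\psi_k:\mathbb{Z}_n\to\mathbb{Z}_n$ is the permutation $\psi_k(s)=ks$. An interval of $\mathbb{Z}_n$ is any subset that is the image of an interval of consecutive integers under the projection $\mathbb{Z}\to\mathbb{Z}_n$ (wrap-around allowed). For $S,T\subseteq\mathbb{Z}_n$, $D_T(S)=\bigl|\,|S\cap T|-|S||T|/n\,\bigr|$, and for a permutation $\sigma$ of $\mathbb{Z}_n$, $D(\sigma)=\max_{I,J}D_J(\sigma(I))$ over all intervals $I,J$ of $\mathbb{Z}_n$. *)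

theory Defs
  imports Complex_Main "HOL-Number_Theory.Number_Theory"
begin

definition Zn :: "nat \<Rightarrow> nat set" where
  "Zn n = {0..<n}"

definition Zn_units :: "nat \<Rightarrow> nat set" where
  "Zn_units n = {k \<in> Zn n. coprime k n}"

text \<open>Intervals of Z_n: images of runs of L consecutive integers a, a+1, ..., a+L-1
  under reduction mod n (wrap-around allowed; L = 0 gives the empty interval).\<close>
definition zinterval :: "nat \<Rightarrow> nat \<Rightarrow> nat \<Rightarrow> nat set" where
  "zinterval n a L = (\<lambda>i. (a + i) mod n) ` {..<L}"

definition is_zinterval :: "nat \<Rightarrow> nat set \<Rightarrow> bool" where
  "is_zinterval n I \<longleftrightarrow> (\<exists>a L. I = zinterval n a L)"

definition psi :: "nat \<Rightarrow> nat \<Rightarrow> nat \<Rightarrow> nat" where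
  "psi n k s = (k * s) mod n"

definition DT :: "nat \<Rightarrow> nat set \<Rightarrow> nat set \<Rightarrow> real" where
  "DT n T S = \<bar>real (card (S \<inter> T)) - real (card S) * real (card T) / real n\<bar>"

definition discrepancy :: "nat \<Rightarrow> (nat \<Rightarrow> nat) \<Rightarrow> real" where
  "discrepancy n \<sigma> =
     Max {DT n J (\<sigma> ` I) | I J. is_zinterval n I \<and> is_zinterval n J}"

end

theory Submission
  imports Defs "HOL-Analysis.Complex_Transcendental"
begin

(* Finite Fourier analysis on Z_n gives
     n |S \<inter> T| - |S| |T| = \<Sum>h = 1..<n. dft n S h * cnj (dft n T h).
   The coefficients of an interval are geometric sums, so |dft n I c| \<le> n * inv_dist n c with
   inv_dist n c = 1/c + 1/(n - c), and the coefficients of psi_k(I) are those of I at the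
   frequencies h k.  Hence
     D(psi_k) \<le> n * \<Sum>h. inv_dist n h * inv_dist n (h k mod n).
   Averaging over the units k: with d = gcd h n and m = n/d, the residue h k mod n is d times a
   uniformly distributed unit of Z_m, and inv_dist scales by 1/d.  The products u * \<Prod>B, for u a
   unit of m and B a set of prime factors of m, are distinct integers \<le> m^2, which gives
     (\<Sum>u unit of m. 1/u) * \<Prod>p|m. (1 + 1/p) \<le> 1 + 2 ln m,
   while m \<le> 2 totient(m) \<Prod>p|m. (1 + 1/p) because \<Prod>p. (1 - 1/p^2) \<ge> 1/2.  So the average of
   inv_dist n (h k mod n) is O(log n / n) for every h \<noteq> 0, and summing over h shows that the
   average discrepancy is O(log^2 n), which is stronger than the claimed bound. *)

section \<open>Roots of unity and the discrete Fourier transform\<close>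

text \<open>Since 2 * pi / 0 = 0, zeta 0 = 1, so the algebraic identities for zeta hold for every n,
  including n = 0.\<close>

definition zeta :: "nat \<Rightarrow> complex" where
  "zeta n = cis (2 * pi / real n)"

lemma zeta_power: "zeta n ^ x = cis (2 * pi * real x / real n)"
  by (simp only: zeta_def Complex.DeMoivre) (simp add: field_simps)

lemma norm_zeta_power [simp]: "norm (zeta n ^ x) = 1"
  by (simp add: zeta_power)

lemma zeta_power_self [simp]: "zeta n ^ n = 1"
proof (cases "n = 0")
  case False
  then show ?thesis by (simp add: zeta_power)
qed (simp add: zeta_def)

lemma zeta_power_mod: "zeta n ^ (x mod n) = zeta n ^ x"
proof -
  have "zeta n ^ x = (zeta n ^ n) ^ (x div n) * zeta n ^ (x mod n)"
    by (metis mult_div_mod_eq power_add power_mult)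
  then show ?thesis by simp
qed

lemma zeta_power_cong: "[x = y] (mod n) \<Longrightarrow> zeta n ^ x = zeta n ^ y"
  by (metis Cong.cong_def zeta_power_mod)

lemma cnj_zeta_power: "cnj (zeta n ^ x) = zeta n ^ ((n - 1) * x)"
proof (cases "n = 0")
  case False
  have "zeta n * zeta n ^ (n - 1) = 1"
    using False zeta_power_self[of n] by (metis Suc_diff_1 not_gr0 power_Suc)
  then have "inverse (zeta n) = zeta n ^ (n - 1)"
    by (rule inverse_unique)
  moreover have "cnj (zeta n) = inverse (zeta n)"
    by (simp add: zeta_def cis_cnj)
  ultimately show ?thesis
    by (simp add: power_mult)
qed (simp add: zeta_def)

lemma sin_ge_third:
  fixes y :: real
  assumes "0 \<le> y" "y \<le> 2"
  shows "y / 3 \<le> sin y"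
proof -
  have "\<bar>sin y - (\<Sum>m<3. sin_coeff m * y ^ m)\<bar> \<le> inverse (fact 3) * \<bar>y\<bar> ^ 3"
    by (rule Maclaurin_sin_bound)
  moreover have "(\<Sum>m<3. sin_coeff m * y ^ m) = y"
    by (simp add: numeral_3_eq_3 sin_coeff_def)
  ultimately have "\<bar>sin y - y\<bar> * 6 \<le> y ^ 3"
    using assms by (simp add: fact_numeral)
  then have "6 * (y - sin y) \<le> y ^ 3"
    using abs_ge_minus_self[of "sin y - y"] by (smt (verit))
  then have "y - y ^ 3 / 6 \<le> sin y"
    by (simp add: field_simps)
  moreover have "y ^ 3 \<le> 4 * y"
    using assms mult_left_mono[of "y\<^sup>2" 4 y] power_mono[of y 2 2]
    by (simp add: power3_eq_cube power2_eq_square mult.commute)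
  ultimately show ?thesis by linarith
qed

lemma norm_one_minus_cis: "norm (1 - cis t) = 2 * \<bar>sin (t / 2)\<bar>"
proof -
  have "(norm (1 - cis t))\<^sup>2 = (1 - cos t)\<^sup>2 + (sin t)\<^sup>2"
    by (simp add: cmod_def)
  also have "\<dots> = 4 * (sin (t / 2))\<^sup>2 * ((sin (t / 2))\<^sup>2 + (cos (t / 2))\<^sup>2)"
  proof -
    have c: "cos t = 1 - 2 * (sin (t / 2))\<^sup>2" and s: "sin t = 2 * sin (t / 2) * cos (t / 2)"
      using cos_double_sin[of "t / 2"] sin_double[of "t / 2"] by simp_all
    have "(1 - (1 - 2 * a\<^sup>2))\<^sup>2 + (2 * a * b)\<^sup>2 = 4 * a\<^sup>2 * (a\<^sup>2 + b\<^sup>2)" for a b :: real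
      by (simp add: power2_eq_square algebra_simps)
    then show ?thesis
      unfolding c s .
  qed
  also have "\<dots> = (2 * \<bar>sin (t / 2)\<bar>)\<^sup>2"
    by (simp add: power_mult_distrib)
  finally show ?thesis
    by (rule power2_eq_imp_eq) simp_all
qed

lemma norm_one_minus_zeta_power_ge:
  assumes "0 < c" "c < n"
  shows "2 * real (min c (n - c)) / real n \<le> norm (1 - zeta n ^ c)"
proof -
  define y where "y = pi * real (min c (n - c)) / real n"
  have "norm (1 - zeta n ^ c) = 2 * \<bar>sin (pi * real c / real n)\<bar>"
    unfolding zeta_power norm_one_minus_cis by (simp add: field_simps)
  also have "sin (pi * real c / real n) = sin y"
  proof (cases "c \<le> n - c")
    case False
    then have "y = pi - pi * real c / real n"
      using assms by (simp add: y_def of_nat_diff field_simps)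
    then show ?thesis by (simp add: sin_pi_minus)
  qed (simp add: y_def)
  finally have norm_eq: "norm (1 - zeta n ^ c) = 2 * \<bar>sin y\<bar>" .
  have "2 * real (min c (n - c)) \<le> real n" by linarith
  moreover have "pi * real (min c (n - c)) \<le> 4 * real (min c (n - c))"
    using pi_less_4 by (intro mult_right_mono) auto
  ultimately have "pi * real (min c (n - c)) \<le> 2 * real n"
    by linarith
  then have "0 \<le> y" "y \<le> 2"
    using assms by (simp_all add: y_def pos_divide_le_eq)
  moreover have "real (min c (n - c)) / real n \<le> y / 3"
    using assms pi_gt3 mult_right_mono[of 3 pi "real (min c (n - c))"]
    by (simp add: y_def field_simps)
  ultimately show ?thesis
    using sin_ge_third[of y] norm_eq by linarith
qed

lemma zeta_power_eq_one_iff: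
  assumes "0 < n"
  shows "zeta n ^ x = 1 \<longleftrightarrow> n dvd x"
proof
  assume "zeta n ^ x = 1"
  show "n dvd x"
  proof (rule ccontr)
    assume "\<not> n dvd x"
    then have "0 < x mod n" "x mod n < n"
      using assms by (auto simp: mod_greater_zero_iff_not_dvd)
    then have "0 < 2 * real (min (x mod n) (n - x mod n)) / real n"
      by simp
    then have "0 < norm (1 - zeta n ^ (x mod n))"
      using norm_one_minus_zeta_power_ge[of "x mod n" n] \<open>0 < x mod n\<close> \<open>x mod n < n\<close>
      by linarith
    then show False
      using \<open>zeta n ^ x = 1\<close> by (simp add: zeta_power_mod)
  qed
next
  assume "n dvd x"
  then show "zeta n ^ x = 1"
    using zeta_power_cong[of x 0 n] by (simp add: cong_0_iff)
qed

lemma sum_zeta_powers: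
  assumes "0 < n"
  shows "(\<Sum>h<n. zeta n ^ (h * x)) = (if n dvd x then of_nat n else 0)"
proof (cases "n dvd x")
  case True
  then have "zeta n ^ (h * x) = 1" for h
    by (simp add: zeta_power_eq_one_iff[OF assms])
  then show ?thesis
    using True by simp
next
  case False
  define z where "z = zeta n ^ x"
  have "z \<noteq> 1" "z ^ n = 1"
    using False zeta_power_eq_one_iff[OF assms]
    by (simp_all add: z_def power_mult[symmetric] mult.commute[of x] power_mult)
  have "(\<Sum>h<n. zeta n ^ (h * x)) = (\<Sum>h<n. z ^ h)"
    by (simp add: z_def mult.commute[of _ x] power_mult)
  also have "\<dots> = 0"
    using \<open>z \<noteq> 1\<close> \<open>z ^ n = 1\<close> by (simp add: geometric_sum)
  finally show ?thesis
    using False by simp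
qed

lemma sum_zeta_orthogonal:
  assumes "s < n" "t < n"
  shows "(\<Sum>h<n. zeta n ^ (h * s) * cnj (zeta n ^ (h * t))) = (if s = t then of_nat n else 0)"
proof -
  have "n dvd s + (n - 1) * t \<longleftrightarrow> [s + (n - 1) * t + t = t] (mod n)"
    by (simp add: cong_add_rcancel_0_nat cong_0_iff)
  also have "s + (n - 1) * t + t = s + n * t"
    using assms by (cases n) auto
  also have "[s + n * t = t] (mod n) \<longleftrightarrow> s = t"
    using assms by (simp add: Cong.cong_def)
  finally have "n dvd s + (n - 1) * t \<longleftrightarrow> s = t" .
  moreover have "zeta n ^ (h * s) * cnj (zeta n ^ (h * t)) = zeta n ^ (h * (s + (n - 1) * t))" for h
  proof -
    have "h * (s + (n - 1) * t) = h * s + (n - 1) * (h * t)"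
      by (simp add: distrib_left mult.left_commute)
    then show ?thesis
      by (simp only: cnj_zeta_power power_add)
  qed
  ultimately show ?thesis
    using sum_zeta_powers[of n] assms by simp
qed

definition dft :: "nat \<Rightarrow> nat set \<Rightarrow> nat \<Rightarrow> complex" where
  "dft n A h = (\<Sum>x\<in>A. zeta n ^ (h * x))"

lemma dft_0 [simp]: "dft n A 0 = of_nat (card A)"
  by (simp add: dft_def)

lemma sum_dft_mult_cnj:
  assumes "S \<subseteq> {..<n}" "T \<subseteq> {..<n}"
  shows "(\<Sum>h<n. dft n S h * cnj (dft n T h)) = of_nat n * of_nat (card (S \<inter> T))"
proof -
  have fin: "finite S" "finite T"
    using assms finite_subset by auto
  have "(\<Sum>h<n. dft n S h * cnj (dft n T h))
        = (\<Sum>s\<in>S. \<Sum>t\<in>T. \<Sum>h<n. zeta n ^ (h * s) * cnj (zeta n ^ (h * t)))"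
    unfolding dft_def cnj_sum sum_product
    by (subst sum.swap, rule sum.cong[OF refl], rule sum.swap)
  also have "\<dots> = (\<Sum>s\<in>S. \<Sum>t\<in>T. if s = t then of_nat n else 0)"
    using assms by (intro sum.cong refl sum_zeta_orthogonal) auto
  also have "\<dots> = of_nat n * of_nat (card (S \<inter> T))"
    using fin by (simp add: sum.If_cases Int_def)
  finally show ?thesis .
qed

lemma dft_card_inter:
  assumes "0 < n" "S \<subseteq> {..<n}" "T \<subseteq> {..<n}"
  shows "of_nat n * of_nat (card (S \<inter> T)) - of_nat (card S) * of_nat (card T)
         = (\<Sum>h = 1..<n. dft n S h * cnj (dft n T h))"
proof -
  have "{..<n} = insert 0 {1..<n}"
    using assms(1) by auto
  then show ?thesis
    using sum_dft_mult_cnj[OF assms(2,3)] by (simp add: diff_eq_eq add.commute)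
qed

section \<open>Fourier coefficients of intervals\<close>

definition inv_dist :: "nat \<Rightarrow> nat \<Rightarrow> real" where
  "inv_dist n c = 1 / real c + 1 / (real n - real c)"

lemma inv_dist_nonneg: "c < n \<Longrightarrow> 0 \<le> inv_dist n c"
  by (simp add: inv_dist_def)

lemma two_div_norm_one_minus_zeta_power_le:
  assumes "0 < c" "c < n"
  shows "2 / norm (1 - zeta n ^ c) \<le> real n * inv_dist n c"
proof -
  define m where "m = min c (n - c)"
  have m: "0 < m" "real m = real c \<or> real m = real n - real c"
    using assms by (auto simp: m_def)
  have "2 / norm (1 - zeta n ^ c) \<le> 2 / (2 * real m / real n)"
    using norm_one_minus_zeta_power_ge[OF assms] m assms
    by (intro frac_le) (auto simp: m_def)
  also have "\<dots> = real n * (1 / real m)"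
    by simp
  also have "\<dots> \<le> real n * inv_dist n c"
    using m assms by (intro mult_left_mono) (auto simp: inv_dist_def)
  finally show ?thesis .
qed

lemma norm_geometric_sum_le:
  fixes z :: complex
  assumes "norm z = 1" "z \<noteq> 1"
  shows "norm (\<Sum>i<L. z ^ i) \<le> 2 / norm (1 - z)"
proof -
  have "norm (\<Sum>i<L. z ^ i) = norm (z ^ L - 1) / norm (1 - z)"
    using assms(2) by (simp add: geometric_sum norm_divide norm_minus_commute)
  also have "norm (z ^ L - 1) \<le> 2"
    using norm_triangle_ineq4[of "z ^ L" 1] assms(1) by (simp add: norm_power)
  finally show ?thesis
    by (simp add: divide_right_mono)
qed

lemma zinterval_subset: "0 < n \<Longrightarrow> zinterval n a L \<subseteq> {..<n}"
  unfolding zinterval_def by auto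

lemma is_zinterval_subset: "0 < n \<Longrightarrow> is_zinterval n I \<Longrightarrow> I \<subseteq> {..<n}"
  unfolding is_zinterval_def using zinterval_subset by blast

lemma inj_on_add_mod:
  fixes a n L :: nat
  assumes "L \<le> n"
  shows "inj_on (\<lambda>i. (a + i) mod n) {..<L}"
proof (rule inj_onI)
  fix i j
  assume "i \<in> {..<L}" "j \<in> {..<L}" "(a + i) mod n = (a + j) mod n"
  then show "i = j"
    using assms by (auto simp: cong_add_lcancel_nat intro: cong_less_modulus_unique_nat
        simp flip: Cong.cong_def)
qed

lemma zinterval_eq_lessThan:
  assumes "0 < n" "n \<le> L"
  shows "zinterval n a L = {..<n}"
proof (rule card_subset_eq)
  have "zinterval n a n \<subseteq> zinterval n a L"
    using assms unfolding zinterval_def by auto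
  moreover have "card (zinterval n a n) = n"
    unfolding zinterval_def by (simp add: card_image inj_on_add_mod)
  ultimately show "card (zinterval n a L) = card {..<n}"
    using zinterval_subset[OF assms(1)]
    by (metis card_lessThan card_mono finite_lessThan finite_subset le_antisym)
qed (use zinterval_subset[OF assms(1)] in auto)

lemma norm_dft_zinterval_le:
  assumes "is_zinterval n I" "0 < c" "c < n"
  shows "norm (dft n I c) \<le> real n * inv_dist n c"
proof -
  obtain a L where I: "I = zinterval n a L"
    using assms(1) unfolding is_zinterval_def by auto
  have "\<not> n dvd c"
    using assms by (auto dest: dvd_imp_le)
  then have z: "zeta n ^ c \<noteq> 1"
    using assms by (simp add: zeta_power_eq_one_iff)
  show ?thesis
  proof (cases "n \<le> L")
    case True
    then have "dft n I c = (\<Sum>h<n. zeta n ^ (h * c))"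
      using assms I zinterval_eq_lessThan by (simp add: dft_def mult.commute)
    also have "\<dots> = 0"
      using sum_zeta_powers[of n c] \<open>\<not> n dvd c\<close> assms by simp
    finally show ?thesis
      using assms inv_dist_nonneg by simp
  next
    case False
    have "zeta n ^ (c * ((a + i) mod n)) = zeta n ^ (c * (a + i))" for i
      by (rule zeta_power_cong) (simp add: Cong.cong_def mod_mult_right_eq)
    then have "dft n I c = (\<Sum>i<L. zeta n ^ (c * (a + i)))"
      unfolding dft_def I zinterval_def using False
      by (subst sum.reindex) (auto simp: inj_on_add_mod)
    also have "\<dots> = zeta n ^ (c * a) * (\<Sum>i<L. (zeta n ^ c) ^ i)"
      by (simp add: sum_distrib_left distrib_left power_add power_mult)
    finally have "norm (dft n I c) = norm (\<Sum>i<L. (zeta n ^ c) ^ i)"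
      by (simp add: norm_mult)
    also have "\<dots> \<le> 2 / norm (1 - zeta n ^ c)"
      using z by (intro norm_geometric_sum_le) simp_all
    also have "\<dots> \<le> real n * inv_dist n c"
      using assms by (intro two_div_norm_one_minus_zeta_power_le)
    finally show ?thesis .
  qed
qed

lemma inj_on_psi: "coprime k n \<Longrightarrow> inj_on (psi n k) {..<n}"
  by (rule inj_onI)
    (auto simp: psi_def cong_mult_lcancel_nat intro: cong_less_modulus_unique_nat
      simp flip: Cong.cong_def)

lemma dft_image_psi:
  assumes "coprime k n" "I \<subseteq> {..<n}"
  shows "dft n (psi n k ` I) h = dft n I (h * k mod n)"
proof -
  have "dft n (psi n k ` I) h = (\<Sum>x\<in>I. zeta n ^ (h * psi n k x))"
    unfolding dft_def using inj_on_subset[OF inj_on_psi assms(2)] assms(1)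
    by (simp add: sum.reindex)
  also have "\<dots> = dft n I (h * k mod n)"
    unfolding dft_def psi_def
    by (intro sum.cong refl zeta_power_cong)
      (simp add: Cong.cong_def mod_mult_left_eq mod_mult_right_eq ac_simps)
  finally show ?thesis .
qed

lemma DT_image_psi_le:
  assumes "0 < n" "coprime k n" "is_zinterval n I" "is_zinterval n J"
  shows "DT n J (psi n k ` I) \<le> real n * (\<Sum>h = 1..<n. inv_dist n h * inv_dist n (h * k mod n))"
proof -
  define S where "S = psi n k ` I"
  have I: "I \<subseteq> {..<n}" and J: "J \<subseteq> {..<n}" and S: "S \<subseteq> {..<n}"
    using assms is_zinterval_subset by (auto simp: S_def psi_def)
  have unit: "0 < h * k mod n" if "h \<in> {1..<n}" for h
    using that assms(2)
    by (auto simp: mod_greater_zero_iff_not_dvd coprime_commute coprime_dvd_mult_left_iff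
        dest: dvd_imp_le)
  have "\<bar>real n * real (card (S \<inter> J)) - real (card S) * real (card J)\<bar>
        = norm (of_real (real n * real (card (S \<inter> J)) - real (card S) * real (card J)) :: complex)"
    by (simp only: norm_of_real)
  also have "\<dots> = norm (\<Sum>h = 1..<n. dft n S h * cnj (dft n J h))"
    using dft_card_inter[OF assms(1) S J] by simp
  also have "\<dots> \<le> (\<Sum>h = 1..<n. norm (dft n I (h * k mod n)) * norm (dft n J h))"
    unfolding S_def using dft_image_psi[OF assms(2) I]
    by (intro order_trans[OF norm_sum]) (simp add: norm_mult)
  also have "\<dots> \<le> (\<Sum>h = 1..<n. (real n * inv_dist n (h * k mod n)) * (real n * inv_dist n h))"
    using assms unit
    by (intro sum_mono mult_mono norm_dft_zinterval_le inv_dist_nonneg mult_nonneg_nonneg) auto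
  also have "\<dots> = real n * (real n * (\<Sum>h = 1..<n. inv_dist n h * inv_dist n (h * k mod n)))"
    by (simp add: sum_distrib_left algebra_simps)
  finally show ?thesis
    using assms(1) by (simp add: S_def DT_def pos_divide_le_eq abs_divide field_simps)
qed

lemma discrepancy_psi_le:
  assumes "0 < n" "coprime k n"
  shows "discrepancy n (psi n k) \<le> real n * (\<Sum>h = 1..<n. inv_dist n h * inv_dist n (h * k mod n))"
  unfolding discrepancy_def
proof (rule Max.boundedI)
  let ?A = "{DT n J (psi n k ` I) | I J. is_zinterval n I \<and> is_zinterval n J}"
  have "?A \<subseteq> (\<lambda>(I, J). DT n J (psi n k ` I)) ` (Pow {..<n} \<times> Pow {..<n})"
    using is_zinterval_subset[OF assms(1)] by fastforce
  then show "finite ?A"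
    by (rule finite_subset) auto
  have "is_zinterval n {}"
    unfolding is_zinterval_def zinterval_def by auto
  then show "?A \<noteq> {}"
    by blast
qed (use DT_image_psi_le[OF assms] in blast)

section \<open>Averaging over the units of Z_n\<close>

lemma Zn_units_iff: "k \<in> Zn_units n \<longleftrightarrow> k < n \<and> coprime k n"
  by (simp add: Zn_units_def Zn_def)

lemma finite_Zn_units [simp]: "finite (Zn_units n)"
  by (simp add: Zn_units_def Zn_def)

lemma Zn_units_subset:
  assumes "1 < n"
  shows "Zn_units n \<subseteq> {1..<n}"
proof
  fix k
  assume "k \<in> Zn_units n"
  moreover have "\<not> coprime 0 n"
    using assms by simp
  ultimately show "k \<in> {1..<n}"
    by (cases "k = 0") (auto simp: Zn_units_iff)
qed

lemma one_in_Zn_units: "1 < n \<Longrightarrow> 1 \<in> Zn_units n"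
  by (simp add: Zn_units_iff)

lemma card_Zn_units_pos: "1 < n \<Longrightarrow> 0 < card (Zn_units n)"
  using one_in_Zn_units[of n] by (auto simp: card_gt_0_iff)

lemma card_Zn_units: "0 < n \<Longrightarrow> card (Zn_units n) = totient n"
proof (cases "n = 1")
  case True
  then have "Zn_units n = {0}"
    by (auto simp: Zn_units_iff)
  then show ?thesis
    using True by simp
next
  case False
  assume "0 < n"
  with False have "k \<in> Zn_units n \<longleftrightarrow> k \<in> totatives n" for k
    by (cases "k = 0"; cases "k = n") (auto simp: Zn_units_iff in_totatives_iff)
  then have "Zn_units n = totatives n"
    by blast
  then show ?thesis
    by (simp add: totient_def)
qed

lemma prime_dvd_prod_primes_iff:
  fixes P :: "nat set"
  assumes "finite P" "\<And>q. q \<in> P \<Longrightarrow> prime q" "prime p"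
  shows "p dvd \<Prod>P \<longleftrightarrow> p \<in> P"
proof
  assume "p dvd \<Prod>P"
  then obtain q where "q \<in> P" "p dvd q"
    using prime_dvd_prod_iff[OF assms(1,3), of "\<lambda>x. x"] by blast
  then show "p \<in> P"
    using assms(2,3) primes_dvd_imp_eq by blast
qed (use assms(1) dvd_prodI[of P _ "\<lambda>x. x"] in auto)

lemma coprime_by_prime_divisors:
  fixes a b :: nat
  assumes "\<And>p. prime p \<Longrightarrow> p dvd a \<Longrightarrow> p dvd b \<Longrightarrow> False"
  shows "coprime a b"
proof (rule ccontr)
  assume "\<not> coprime a b"
  then have "gcd a b \<noteq> 1"
    using coprime_iff_gcd_eq_1 by blast
  then obtain p where "prime p" "p dvd gcd a b"
    using prime_factor_nat by blast
  then show False
    using assms by auto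
qed

lemma exists_Zn_unit_cong:
  fixes m n c :: nat
  assumes "0 < n" "m dvd n" "coprime c m"
  shows "\<exists>k\<in>Zn_units n. [k = c] (mod m)"
proof -
  define P where "P = {p \<in> prime_factors n. \<not> p dvd c}"
  have P: "finite P" "\<And>p. p \<in> P \<Longrightarrow> prime p"
    by (auto simp: P_def)
  have "coprime (c + m * \<Prod>P) n"
  proof (rule coprime_by_prime_divisors)
    fix p :: nat
    assume p: "prime p" "p dvd c + m * \<Prod>P" "p dvd n"
    show False
    proof (cases "p dvd c")
      case True
      then have "\<not> p dvd m"
        using p(1) assms(3) coprime_common_divisor not_prime_unit by blast
      moreover have "\<not> p dvd \<Prod>P"
        using True prime_dvd_prod_primes_iff[OF P p(1)] by (auto simp: P_def)
      ultimately show False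
        using True p by (simp add: dvd_add_right_iff prime_dvd_mult_iff)
    next
      case False
      then have "p dvd \<Prod>P"
        using p assms(1) prime_dvd_prod_primes_iff[OF P p(1)] by (auto simp: P_def in_prime_factors_iff)
      then show False
        using False p(2) by (simp add: dvd_add_left_iff)
    qed
  qed
  then have "(c + m * \<Prod>P) mod n \<in> Zn_units n"
    using assms(1) by (simp add: Zn_units_iff)
  moreover have "[(c + m * \<Prod>P) mod n = c] (mod m)"
    using assms(2) by (simp add: Cong.cong_def mod_mod_cancel)
  ultimately show ?thesis ..
qed

lemma sum_Zn_units_psi:
  assumes "coprime w n"
  shows "(\<Sum>k\<in>Zn_units n. f (psi n w k)) = sum f (Zn_units n)"
proof -
  have inj: "inj_on (psi n w) (Zn_units n)"
    using inj_on_psi[OF assms] by (rule inj_on_subset) (auto simp: Zn_units_iff)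
  have "psi n w ` Zn_units n \<subseteq> Zn_units n"
    using assms by (auto simp: Zn_units_iff psi_def)
  then have "psi n w ` Zn_units n = Zn_units n"
    using inj by (intro endo_inj_surj) auto
  then show ?thesis
    using sum.reindex[OF inj, of f] by simp
qed

text \<open>Multiplication by a lift to Z_n of any unit a of Z_m permutes the units of Z_n, so the
  distribution of j k mod m is invariant under multiplication by a; averaging over a makes it uniform.\<close>

lemma sum_Zn_units_mod_divisor:
  fixes G :: "nat \<Rightarrow> real"
  assumes "0 < n" "m dvd n" "coprime j m"
  shows "real (card (Zn_units m)) * (\<Sum>k\<in>Zn_units n. G (j * k mod m))
         = real (card (Zn_units n)) * sum G (Zn_units m)"
proof -
  have shift: "(\<Sum>k\<in>Zn_units n. G (j * k mod m)) = (\<Sum>k\<in>Zn_units n. G (psi m (j * k mod m) a))"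
    if a: "a \<in> Zn_units m" for a
  proof -
    have "coprime a m"
      using a by (simp add: Zn_units_iff)
    then obtain w where w: "w \<in> Zn_units n" "[w = a] (mod m)"
      using exists_Zn_unit_cong[OF assms(1,2)] by blast
    have "j * psi n w k mod m = psi m (j * k mod m) a" for k
    proof -
      have "[j * (w * k mod n) = j * (w * k)] (mod m)"
        using assms(2) by (intro cong_scalar_left) (simp add: Cong.cong_def mod_mod_cancel)
      also have "[j * (w * k) = j * (a * k)] (mod m)"
        using w(2) by (intro cong_scalar_left cong_scalar_right)
      also have "j * (a * k) = j * k * a"
        by simp
      also have "[j * k * a = (j * k mod m) * a] (mod m)"
        by (intro cong_scalar_right) simp
      finally show ?thesis
        by (simp add: psi_def Cong.cong_def)
    qed
    then show ?thesis
      using sum_Zn_units_psi[of w n "\<lambda>k. G (j * k mod m)"] w(1) by (simp add: Zn_units_iff)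
  qed
  have "real (card (Zn_units m)) * (\<Sum>k\<in>Zn_units n. G (j * k mod m))
        = (\<Sum>a\<in>Zn_units m. \<Sum>k\<in>Zn_units n. G (j * k mod m))"
    by simp
  also have "\<dots> = (\<Sum>a\<in>Zn_units m. \<Sum>k\<in>Zn_units n. G (psi m (j * k mod m) a))"
    using shift by (rule sum.cong[OF refl])
  also have "\<dots> = (\<Sum>k\<in>Zn_units n. \<Sum>a\<in>Zn_units m. G (psi m (j * k mod m) a))"
    by (rule sum.swap)
  also have "\<dots> = (\<Sum>k\<in>Zn_units n. sum G (Zn_units m))"
  proof (rule sum.cong[OF refl])
    fix k assume "k \<in> Zn_units n"
    then have "coprime k m"
      using coprime_divisors[OF dvd_refl assms(2)] by (simp add: Zn_units_iff)
    moreover have "m \<noteq> 0"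
      using assms(1,2) by auto
    ultimately have "coprime (j * k mod m) m"
      using assms(3) by simp
    then show "(\<Sum>a\<in>Zn_units m. G (psi m (j * k mod m) a)) = sum G (Zn_units m)"
      by (rule sum_Zn_units_psi)
  qed
  finally show ?thesis
    by simp
qed

section \<open>Reciprocal sums over units\<close>

lemma inv_dist_mult:
  assumes "0 < d"
  shows "inv_dist (d * m) (d * x) = inv_dist m x / real d"
proof -
  have "real (d * m) - real (d * x) = real d * (real m - real x)"
    by (simp add: algebra_simps)
  then show ?thesis
    using assms by (simp add: inv_dist_def add_divide_distrib ac_simps)
qed

lemma sum_inv_dist_reflect:
  assumes "finite A" "A \<subseteq> {..<n}" "\<And>u. u \<in> A \<Longrightarrow> n - u \<in> A"
  shows "sum (inv_dist n) A = 2 * (\<Sum>u\<in>A. 1 / real u)"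
proof -
  have "(\<Sum>u\<in>A. 1 / (real n - real u)) = (\<Sum>u\<in>A. 1 / real u)"
    by (rule sum.reindex_bij_witness[of _ "\<lambda>u. n - u" "\<lambda>u. n - u"])
      (use assms(2,3) in \<open>auto simp: of_nat_diff\<close>)
  then show ?thesis
    by (simp add: inv_dist_def sum.distrib)
qed

lemma sum_inverse_le_one_plus_ln:
  assumes "1 \<le> N"
  shows "(\<Sum>j = 1..N. 1 / real j) \<le> 1 + ln (real N)"
  using assms
proof (induction N rule: dec_induct)
  case (step N)
  have "ln (real N / real (Suc N)) \<le> real N / real (Suc N) - 1"
    using step by (intro ln_le_minus_one) simp
  then have "1 / real (Suc N) \<le> ln (real (Suc N)) - ln (real N)"
    using step by (simp add: ln_div field_simps)
  then show ?case
    using step.IH by simp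
qed simp

lemma prod_prime_factors_subset_dvd:
  fixes m :: nat
  assumes "0 < m" "B \<subseteq> prime_factors m"
  shows "\<Prod>B dvd m"
proof -
  have "\<Prod>B dvd \<Prod>(prime_factors m)"
    using assms(2) by (intro prod_dvd_prod_subset) auto
  also have "\<dots> dvd (\<Prod>p\<in>prime_factors m. p ^ multiplicity p m)"
    by (intro prod_dvd_prod) (auto simp: prime_factors_multiplicity)
  also have "\<dots> = m"
    using prime_factorization_nat[OF assms(1)] by simp
  finally show ?thesis .
qed

lemma inj_on_mult_prod_prime_factors:
  assumes "0 < m"
  shows "inj_on (\<lambda>(u, B). u * \<Prod>B) (Zn_units m \<times> Pow (prime_factors m))"
proof (rule inj_onI, clarify)
  fix u B v C
  assume u: "u \<in> Zn_units m" and v: "v \<in> Zn_units m"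
    and B: "B \<subseteq> prime_factors m" and C: "C \<subseteq> prime_factors m"
    and eq: "u * \<Prod>B = v * \<Prod>C"
  have dvd_iff: "p dvd w * \<Prod>D \<longleftrightarrow> p \<in> D"
    if "w \<in> Zn_units m" "D \<subseteq> prime_factors m" "p \<in> prime_factors m" for w D p
  proof -
    have p: "prime p" "p dvd m"
      using that(3) by (auto simp: in_prime_factors_iff)
    have "\<not> p dvd w"
      using that(1) p coprime_common_divisor not_prime_unit by (auto simp: Zn_units_iff)
    moreover have "finite D" "\<And>q. q \<in> D \<Longrightarrow> prime q"
      using that(2) finite_subset by (auto simp: in_prime_factors_iff)
    ultimately show ?thesis
      using p(1) prime_dvd_prod_primes_iff by (simp add: prime_dvd_mult_iff)
  qed
  have "p \<in> B \<longleftrightarrow> p \<in> C" if "p \<in> prime_factors m" for p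
    using dvd_iff[OF u B that] dvd_iff[OF v C that] eq by simp
  then have "B = C"
    using B C by blast
  moreover have "0 < \<Prod>B"
    using prod_prime_factors_subset_dvd[OF assms B] assms by (auto intro: Nat.gr0I)
  ultimately show "u = v \<and> B = C"
    using eq by simp
qed

lemma sum_inverse_Zn_units_mult_prod_le:
  assumes "1 < m"
  shows "(\<Sum>u\<in>Zn_units m. 1 / real u) * (\<Prod>p\<in>prime_factors m. 1 + 1 / real p)
         \<le> 1 + 2 * ln (real m)"
proof -
  let ?X = "Zn_units m \<times> Pow (prime_factors m)"
  let ?f = "\<lambda>(u, B). u * \<Prod>B"
  have "?f ` ?X \<subseteq> {1..m * m}"
  proof clarify
    fix u B
    assume "u \<in> Zn_units m" "B \<subseteq> prime_factors m"
    moreover from this have "\<Prod>B dvd m"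
      using assms by (intro prod_prime_factors_subset_dvd) auto
    ultimately have "1 \<le> u" "u \<le> m" "1 \<le> \<Prod>B" "\<Prod>B \<le> m"
      using assms Zn_units_subset[OF assms] dvd_imp_le[of "\<Prod>B" m]
      by (auto simp: Suc_le_eq intro: Nat.gr0I)
    then show "u * \<Prod>B \<in> {1..m * m}"
      by (simp add: mult_le_mono)
  qed
  have "(\<Prod>p\<in>prime_factors m. 1 + 1 / real p) = (\<Sum>B\<in>Pow (prime_factors m). 1 / real (\<Prod>B))"
    using prod_add[of "prime_factors m" "\<lambda>p. 1 / real p" "\<lambda>_. 1"]
    by (simp add: add.commute prod_dividef)
  then have "(\<Sum>u\<in>Zn_units m. 1 / real u) * (\<Prod>p\<in>prime_factors m. 1 + 1 / real p)
             = (\<Sum>x\<in>?X. 1 / real (?f x))"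
    by (simp add: sum_product sum.cartesian_product case_prod_beta)
  also have "\<dots> = (\<Sum>z\<in>?f ` ?X. 1 / real z)"
    using inj_on_mult_prod_prime_factors assms by (simp add: sum.reindex)
  also have "\<dots> \<le> (\<Sum>z = 1..m * m. 1 / real z)"
    using \<open>?f ` ?X \<subseteq> {1..m * m}\<close> by (intro sum_mono2) auto
  also have "\<dots> \<le> 1 + ln (real (m * m))"
    using assms by (intro sum_inverse_le_one_plus_ln) simp
  also have "ln (real (m * m)) = 2 * ln (real m)"
    using assms by (simp add: ln_mult)
  finally show ?thesis .
qed

lemma prod_one_minus_inverse_square:
  assumes "1 \<le> N"
  shows "(\<Prod>j = 2..N. 1 - 1 / (real j)\<^sup>2) = (real N + 1) / (2 * real N)"
  using assms
proof (induction N rule: dec_induct)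
  case (step N)
  have "{2..Suc N} = insert (Suc N) {2..N}"
    using step by auto
  then have "(\<Prod>j = 2..Suc N. 1 - 1 / (real j)\<^sup>2)
             = (1 - 1 / (real N + 1)\<^sup>2) * ((real N + 1) / (2 * real N))"
    using step.IH by simp
  also have "\<dots> = (real (Suc N) + 1) / (2 * real (Suc N))"
  proof -
    have "real N \<noteq> 0" "real N + 1 \<noteq> 0"
      using step.hyps by auto
    then show ?thesis
      by (simp add: divide_simps) (simp add: power2_eq_square algebra_simps)
  qed
  finally show ?case .
qed simp

lemma prod_one_minus_inverse_square_ge:
  assumes "A \<subseteq> {2..N}"
  shows "1 / 2 \<le> (\<Prod>p\<in>A. 1 - 1 / (real p)\<^sup>2)"
proof (cases "A = {}")
  case False
  then have N: "1 \<le> N"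
    using assms by auto
  have factor: "0 \<le> 1 - 1 / (real p)\<^sup>2 \<and> 1 - 1 / (real p)\<^sup>2 \<le> 1" if "2 \<le> p" for p
    using that by (simp add: field_simps)
  have "1 / 2 \<le> (real N + 1) / (2 * real N)"
    using N by (simp add: field_simps)
  also have "\<dots> = (\<Prod>p\<in>{2..N} - A. 1 - 1 / (real p)\<^sup>2) * (\<Prod>p\<in>A. 1 - 1 / (real p)\<^sup>2)"
    using prod_one_minus_inverse_square[OF N] prod.subset_diff[OF assms, of "\<lambda>p. 1 - 1 / (real p)\<^sup>2"]
    by simp
  also have "\<dots> \<le> (\<Prod>p\<in>A. 1 - 1 / (real p)\<^sup>2)"
    using assms factor
    by (intro mult_left_le_one_le prod_le_1 prod_nonneg) (auto simp: subset_iff)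
  finally show ?thesis .
qed simp

lemma real_le_totient_mult_prod:
  assumes "0 < m"
  shows "real m \<le> 2 * real (totient m) * (\<Prod>p\<in>prime_factors m. 1 + 1 / real p)"
proof -
  have primes: "prime_factors m \<subseteq> {2..m}"
    using assms by (auto simp: in_prime_factors_iff prime_ge_2_nat dvd_imp_le)
  have "real (totient m) * (\<Prod>p\<in>prime_factors m. 1 + 1 / real p)
        = real m * (\<Prod>p\<in>prime_factors m. (1 - 1 / real p) * (1 + 1 / real p))"
    by (simp add: totient_formula2 prod.distrib)
  also have "(\<Prod>p\<in>prime_factors m. (1 - 1 / real p) * (1 + 1 / real p))
             = (\<Prod>p\<in>prime_factors m. 1 - 1 / (real p)\<^sup>2)"
    by (intro prod.cong refl) (simp add: algebra_simps power2_eq_square)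
  finally have "2 * real (totient m) * (\<Prod>p\<in>prime_factors m. 1 + 1 / real p)
                = real m * (2 * (\<Prod>p\<in>prime_factors m. 1 - 1 / (real p)\<^sup>2))"
    by simp
  moreover have "real m * 1 \<le> real m * (2 * (\<Prod>p\<in>prime_factors m. 1 - 1 / (real p)\<^sup>2))"
    using prod_one_minus_inverse_square_ge[OF primes] by (intro mult_left_mono) auto
  ultimately show ?thesis
    by simp
qed

lemma sum_inv_dist_Zn_units:
  assumes "1 < m"
  shows "sum (inv_dist m) (Zn_units m) = 2 * (\<Sum>u\<in>Zn_units m. 1 / real u)"
proof (rule sum_inv_dist_reflect)
  fix u
  assume u: "u \<in> Zn_units m"
  have "u \<in> {1..<m}"
    using Zn_units_subset[OF assms] u ..
  then have "gcd (m - u) m = gcd u m"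
    by (simp add: gcd_diff2_nat)
  moreover have "coprime u m"
    using u by (simp add: Zn_units_iff)
  ultimately have "coprime (m - u) m"
    by (metis coprime_iff_gcd_eq_1)
  then show "m - u \<in> Zn_units m"
    using \<open>u \<in> {1..<m}\<close> by (simp add: Zn_units_iff)
qed (auto simp: Zn_units_iff)

lemma sum_Zn_units_inv_dist_le:
  assumes "1 < n" "0 < h" "h < n"
  shows "(\<Sum>k\<in>Zn_units n. inv_dist n (h * k mod n))
         \<le> 4 * real (card (Zn_units n)) * (1 + 2 * ln (real n)) / real n"
proof -
  define d where "d = gcd h n"
  define m where "m = n div d"
  define j where "j = h div d"
  define H where "H = (\<Sum>u\<in>Zn_units m. 1 / real u)"
  define P where "P = (\<Prod>p\<in>prime_factors m. 1 + 1 / real p)"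
  let ?cU = "real (card (Zn_units n))"
  let ?cM = "real (card (Zn_units m))"
  have n: "n = d * m" and h: "h = d * j" and "0 < d"
    using assms by (simp_all add: d_def m_def j_def)
  have "coprime j m"
    unfolding j_def m_def d_def using assms by (intro div_gcd_coprime) simp
  have "m \<noteq> 1"
    using assms n h by (metis dvd_triv_left mult.right_neutral nat_dvd_not_less)
  then have "1 < m"
    using assms n by (cases m) auto
  have "0 < ?cM"
    using card_Zn_units_pos[OF \<open>1 < m\<close>] by simp
  have "0 \<le> H" "0 \<le> P"
    by (auto simp: H_def P_def intro: sum_nonneg prod_nonneg)
  have "inv_dist n (h * k mod n) = inv_dist m (j * k mod m) / real d" for k
    using \<open>0 < d\<close> by (simp add: n h mult.assoc inv_dist_mult flip: mult_mod_right)
  then have "(\<Sum>k\<in>Zn_units n. inv_dist n (h * k mod n))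
             = (\<Sum>k\<in>Zn_units n. inv_dist m (j * k mod m)) / real d"
    by (simp add: sum_divide_distrib)
  also have "(\<Sum>k\<in>Zn_units n. inv_dist m (j * k mod m)) = ?cU * (2 * H) / ?cM"
  proof -
    have "?cM * (\<Sum>k\<in>Zn_units n. inv_dist m (j * k mod m)) = ?cU * sum (inv_dist m) (Zn_units m)"
      using assms \<open>coprime j m\<close> \<open>0 < d\<close> \<open>1 < m\<close> by (intro sum_Zn_units_mod_divisor) (auto simp: n)
    also have "sum (inv_dist m) (Zn_units m) = 2 * H"
      unfolding H_def by (rule sum_inv_dist_Zn_units[OF \<open>1 < m\<close>])
    finally show ?thesis
      using \<open>0 < ?cM\<close> by (auto simp: eq_divide_eq ac_simps)
  qed
  also have "?cU * (2 * H) / ?cM / real d = 2 * ?cU * H * real m / (?cM * real n)"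
    using \<open>0 < d\<close> \<open>0 < ?cM\<close> \<open>1 < m\<close> by (simp add: n field_simps)
  also have "\<dots> \<le> 2 * ?cU * H * (2 * ?cM * P) / (?cM * real n)"
    using real_le_totient_mult_prod[of m] card_Zn_units[of m] \<open>1 < m\<close> \<open>0 \<le> H\<close> \<open>0 < ?cM\<close>
    by (intro divide_right_mono mult_left_mono) (auto simp: P_def)
  also have "\<dots> = 4 * ?cU * (H * P) / real n"
    using \<open>0 < ?cM\<close> by (auto simp: field_simps)
  also have "\<dots> \<le> 4 * ?cU * (1 + 2 * ln (real n)) / real n"
  proof -
    have "H * P \<le> 1 + 2 * ln (real m)"
      unfolding H_def P_def by (rule sum_inverse_Zn_units_mult_prod_le[OF \<open>1 < m\<close>])
    also have "\<dots> \<le> 1 + 2 * ln (real n)"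
      using \<open>1 < m\<close> \<open>0 < d\<close> by (simp add: n)
    finally show ?thesis
      by (intro divide_right_mono mult_left_mono) auto
  qed
  finally show ?thesis .
qed

lemma sum_inv_dist_le:
  assumes "1 < n"
  shows "(\<Sum>h = 1..<n. inv_dist n h) \<le> 2 * (1 + ln (real n))"
proof -
  have "(\<Sum>h = 1..<n. inv_dist n h) = 2 * (\<Sum>h = 1..<n. 1 / real h)"
    by (rule sum_inv_dist_reflect) auto
  also have "(\<Sum>h = 1..<n. 1 / real h) \<le> (\<Sum>h = 1..n. 1 / real h)"
    by (rule sum_mono2) auto
  also have "\<dots> \<le> 1 + ln (real n)"
    using assms by (intro sum_inverse_le_one_plus_ln) simp
  finally show ?thesis
    by simp
qed

lemma sum_discrepancy_psi_le:
  assumes "1 < n"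
  shows "(\<Sum>k\<in>Zn_units n. discrepancy n (psi n k))
         \<le> real (card (Zn_units n)) * (8 * (1 + 2 * ln (real n)) * (1 + ln (real n)))"
proof -
  let ?cU = "real (card (Zn_units n))"
  define K where "K = 4 * ?cU * (1 + 2 * ln (real n)) / real n"
  have "(\<Sum>k\<in>Zn_units n. discrepancy n (psi n k))
        \<le> (\<Sum>k\<in>Zn_units n. real n * (\<Sum>h = 1..<n. inv_dist n h * inv_dist n (h * k mod n)))"
    using assms by (intro sum_mono discrepancy_psi_le) (auto simp: Zn_units_iff)
  also have "\<dots> = real n * (\<Sum>h = 1..<n. inv_dist n h * (\<Sum>k\<in>Zn_units n. inv_dist n (h * k mod n)))"
    by (simp add: sum_distrib_left sum.swap[of _ "Zn_units n"])
  also have "\<dots> \<le> real n * (\<Sum>h = 1..<n. inv_dist n h * K)"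
    unfolding K_def using assms
    by (intro mult_left_mono sum_mono sum_Zn_units_inv_dist_le inv_dist_nonneg) auto
  also have "\<dots> = real n * K * (\<Sum>h = 1..<n. inv_dist n h)"
    by (simp add: sum_distrib_left ac_simps)
  also have "\<dots> = 4 * ?cU * (1 + 2 * ln (real n)) * (\<Sum>h = 1..<n. inv_dist n h)"
    using assms by (simp add: K_def)
  also have "\<dots> \<le> 4 * ?cU * (1 + 2 * ln (real n)) * (2 * (1 + ln (real n)))"
    using assms sum_inv_dist_le by (intro mult_left_mono) auto
  finally show ?thesis
    by (simp add: algebra_simps)
qed

lemma quadratic_le_square_mult_ln:
  fixes L :: real
  assumes "ln 3 \<le> L"
  shows "8 * (1 + 2 * L) * (1 + L) \<le> 48 / ln (ln 3) * L\<^sup>2 * ln L"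
proof -
  have "1 < ln (3 :: real)"
    using ln3_gt_1 .
  then have "0 < ln (ln (3 :: real))" "1 \<le> L" "ln (ln 3) \<le> ln L"
    using assms by auto
  have "8 * (1 + 2 * L) * (1 + L) \<le> 48 * L\<^sup>2"
  proof -
    have "1 \<le> L * L" "L \<le> L * L"
      using \<open>1 \<le> L\<close> mult_mono[of 1 L 1 L] mult_left_mono[of 1 L L] by auto
    moreover have "8 * (1 + 2 * L) * (1 + L) = 8 + 24 * L + 16 * (L * L)"
      by (simp add: algebra_simps)
    ultimately show ?thesis
      using power2_eq_square[of L] by linarith
  qed
  also have "\<dots> \<le> 48 * L\<^sup>2 * (ln L / ln (ln 3))"
  proof -
    have "1 \<le> ln L / ln (ln 3)"
      using \<open>0 < ln (ln 3)\<close> \<open>ln (ln 3) \<le> ln L\<close> by (subst le_divide_eq_1_pos) auto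
    then show ?thesis
      using mult_left_mono[of 1 "ln L / ln (ln 3)" "48 * L\<^sup>2"] by simp
  qed
  finally show ?thesis
    by (simp add: field_simps)
qed

lemma exists_le_of_sum_le:
  fixes f :: "'a \<Rightarrow> real"
  assumes "finite A" "A \<noteq> {}" "sum f A \<le> real (card A) * B"
  shows "\<exists>x\<in>A. f x \<le> B"
proof (rule ccontr)
  assume "\<not> (\<exists>x\<in>A. f x \<le> B)"
  then have "(\<Sum>x\<in>A. B) < sum f A"
    using assms(1,2) by (intro sum_strict_mono) auto
  then show False
    using assms(3) by simp
qed

theorem mainTheorem5:
  shows "\<exists>C>0. \<forall>n::nat. n \<ge> 3 \<longrightarrow>
     (\<Sum>k\<in>Zn_units n. discrepancy n (psi n k)) / real (card (Zn_units n))
        \<le> C * (ln (real n))\<^sup>2 * ln (ln (real n))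
   \<and> (\<exists>k\<in>Zn_units n. discrepancy n (psi n k) \<le> C * (ln (real n))\<^sup>2 * ln (ln (real n)))"
proof (intro exI[of _ "48 / ln (ln 3)"] conjI allI impI)
  show "0 < 48 / ln (ln (3 :: real))"
    using ln3_gt_1 by simp
  fix n :: nat
  assume "3 \<le> n"
  define B where "B = 48 / ln (ln 3) * (ln (real n))\<^sup>2 * ln (ln (real n))"
  have "0 < card (Zn_units n)"
    using \<open>3 \<le> n\<close> by (intro card_Zn_units_pos) simp
  have "(\<Sum>k\<in>Zn_units n. discrepancy n (psi n k))
        \<le> real (card (Zn_units n)) * (8 * (1 + 2 * ln (real n)) * (1 + ln (real n)))"
    using \<open>3 \<le> n\<close> by (intro sum_discrepancy_psi_le) simp
  also have "\<dots> \<le> real (card (Zn_units n)) * B"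
    unfolding B_def using \<open>3 \<le> n\<close>
    by (intro mult_left_mono quadratic_le_square_mult_ln) auto
  finally have sum_le: "(\<Sum>k\<in>Zn_units n. discrepancy n (psi n k)) \<le> real (card (Zn_units n)) * B" .
  then show "(\<Sum>k\<in>Zn_units n. discrepancy n (psi n k)) / real (card (Zn_units n)) \<le> B"
    using \<open>0 < card (Zn_units n)\<close> by (simp add: divide_le_eq mult.commute)
  show "\<exists>k\<in>Zn_units n. discrepancy n (psi n k) \<le> B"
    using sum_le \<open>0 < card (Zn_units n)\<close> by (intro exists_le_of_sum_le) auto
qed

end
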